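(* Let $\mathbb{A},\mathbb{B}$ be real square matrices of the same size such that $\mathbb{A}^{s}=\frac{1}{2}(\mathbb{A}+\mathbb{A}^{\dagger})$ is positive definite and $\mathbb{B}$ is a non-singular symmetric matrix with exactly one negative eigenvalue. Then $\mathbb{A}\mathbb{B}$ is invertible and has exactly one negative eigenvalue, and the geometric multiplicity of that eigenvalue is $1$.
   Context: $\mathbb{M}^{\dagger}$ denotes the transpose of $\mathbb{M}$. *)

theory Defs
  imports "Jordan_Normal_Form.Jordan_Normal_Form_Uniqueness"
begin

definition sym_part :: "real mat \<Rightarrow> real mat" where
  "sym_part A = (1/2) \<cdot>\<^sub>m (A + transpose_mat A)"

definition pos_def_mat :: "nat \<Rightarrow> real mat \<Rightarrow> bool" where
  "pos_def_mat n M \<longleftrightarrow> M \<in> carrier_mat n n \<and>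
     (\<forall>v \<in> carrier_vec n. v \<noteq> 0\<^sub>v n \<longrightarrow> v \<bullet> (M *\<^sub>v v) > 0)"

definition alg_mult :: "real mat \<Rightarrow> real \<Rightarrow> nat" where
  "alg_mult M l = Polynomial.order l (char_poly M)"

definition geom_mult :: "real mat \<Rightarrow> real \<Rightarrow> nat" where
  "geom_mult M l = kernel_dim (M - l \<cdot>\<^sub>m 1\<^sub>m (dim_row M))"

end

theory Submission
  imports Defs "Jordan_Normal_Form.Schur_Decomposition"
begin

text \<open>Orthogonally diagonalising the symmetric matrix B shows that its quadratic form has exactly one
  negative square; hence det B < 0 and no plane is negative definite for B. Positive definiteness of
  the symmetric part of A gives det A > 0, so det (A B) < 0, and the intermediate value theorem applied
  to t \<mapsto> det (A B + t I) yields a negative eigenvalue of A B. If v, w are eigenvectors of A B with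
  negative eigenvalues l1, l2, then for x = a v + b w the vector B x is nonzero and
  (B x) \<bullet> A (B x) = x \<bullet> B (a l1 v + b l2 w) > 0; a discriminant argument on this binary form
  shows x \<bullet> B x < 0 for all (a, b) \<noteq> (0, 0). So v and w are linearly dependent, which gives both
  the uniqueness of the negative eigenvalue and its geometric multiplicity one.\<close>

lemma smult_mat_mult_mat_vec:
  fixes A :: "'a::comm_ring_1 mat"
  assumes "A \<in> carrier_mat nr nc" and "v \<in> carrier_vec nc"
  shows "(k \<cdot>\<^sub>m A) *\<^sub>v v = k \<cdot>\<^sub>v (A *\<^sub>v v)"
  using assms by (intro eq_vecI) (auto simp: scalar_prod_def sum_distrib_left ac_simps)

lemma quadratic_form_sym_part:
  assumes A: "A \<in> carrier_mat n n" and v: "v \<in> carrier_vec n"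
  shows "v \<bullet> (sym_part A *\<^sub>v v) = v \<bullet> (A *\<^sub>v v)"
proof -
  have "v \<bullet> (transpose_mat A *\<^sub>v v) = v \<bullet> (A *\<^sub>v v)"
    using transpose_vec_mult_scalar[OF A v v] comm_scalar_prod[of v n "transpose_mat A *\<^sub>v v"] A v
    by simp
  moreover have "sym_part A *\<^sub>v v = (1/2) \<cdot>\<^sub>v (A *\<^sub>v v + transpose_mat A *\<^sub>v v)"
    unfolding sym_part_def using A v
    by (simp add: smult_mat_mult_mat_vec[of _ n n] add_mult_distrib_mat_vec[of A n n "transpose_mat A"])
  ultimately show ?thesis
    using A v by (simp add: scalar_prod_add_distrib[of v n])
qed

lemma quadratic_form_pos:
  assumes A: "A \<in> carrier_mat n n" and pd: "pos_def_mat n (sym_part A)"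
    and v: "v \<in> carrier_vec n" "v \<noteq> 0\<^sub>v n"
  shows "v \<bullet> (A *\<^sub>v v) > 0"
  using pd v quadratic_form_sym_part[OF A v(1)] unfolding pos_def_mat_def by auto

lemma scalar_prod_sym_mat_comm:
  fixes M :: "'a::comm_ring_1 mat"
  assumes M: "M \<in> carrier_mat n n" and sym: "transpose_mat M = M"
    and u: "u \<in> carrier_vec n" and v: "v \<in> carrier_vec n"
  shows "u \<bullet> (M *\<^sub>v v) = v \<bullet> (M *\<^sub>v u)"
  using transpose_vec_mult_scalar[OF M v u] comm_scalar_prod[of "M *\<^sub>v u" n v] M u v sym by simp

lemma nonzero_vec_index:
  assumes "v \<in> carrier_vec n" and "v \<noteq> 0\<^sub>v n"
  shows "\<exists>i < n. v $ i \<noteq> 0"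
proof (rule ccontr)
  assume "\<not> ?thesis"
  then have "v = 0\<^sub>v n"
    using assms(1) by (intro eq_vecI) auto
  with assms(2) show False ..
qed

lemma invertible_mat_iff_det_nonzero:
  fixes M :: "'a::field mat"
  assumes M: "M \<in> carrier_mat n n"
  shows "invertible_mat M \<longleftrightarrow> det M \<noteq> 0"
proof
  assume "invertible_mat M"
  then obtain N where NM: "N * M = 1\<^sub>m (dim_row N)" and MN: "M * N = 1\<^sub>m n"
    using M unfolding invertible_mat_def inverts_mat_def by auto
  have "dim_row N = n" "dim_col N = n"
    using arg_cong[OF NM, of dim_col] arg_cong[OF MN, of dim_col] M by auto
  then have N: "N \<in> carrier_mat n n" by auto
  show "det M \<noteq> 0"
    using arg_cong[OF NM, of det] det_mult[OF N M] N by auto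
next
  assume "det M \<noteq> 0"
  from det_non_zero_imp_unit[OF M this, of "()"] show "invertible_mat M"
    using M unfolding Units_def ring_mat_def invertible_mat_def inverts_mat_def by auto
qed

lemma invertible_mat_kernel_trivial:
  fixes M :: "'a::field mat"
  assumes M: "M \<in> carrier_mat n n" and inv: "invertible_mat M"
    and v: "v \<in> carrier_vec n" and Mv: "M *\<^sub>v v = 0\<^sub>v n"
  shows "v = 0\<^sub>v n"
  using det_0_iff_vec_prod_zero[OF M] invertible_mat_iff_det_nonzero[OF M] inv v Mv by blast

lemma invertible_mat_not_eigenvalue_0:
  fixes M :: "'a::field mat"
  assumes M: "M \<in> carrier_mat n n" and inv: "invertible_mat M"
  shows "\<not> eigenvalue M 0"
proof
  assume "eigenvalue M 0"
  then obtain v where v: "v \<in> carrier_vec n" "v \<noteq> 0\<^sub>v n" and "M *\<^sub>v v = 0 \<cdot>\<^sub>v v"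
    using M unfolding eigenvalue_def eigenvector_def by auto
  then have "M *\<^sub>v v = 0\<^sub>v n" by auto
  then show False
    using invertible_mat_kernel_trivial[OF M inv v(1)] v(2) by simp
qed

section \<open>Spectral theorem for real symmetric matrices\<close>

lemma conjugate_of_real_mat_mult_vec:
  fixes M :: "real mat" and z :: "complex vec"
  assumes "M \<in> carrier_mat n n" and "z \<in> carrier_vec n"
  shows "conjugate (map_mat complex_of_real M *\<^sub>v z) = map_mat complex_of_real M *\<^sub>v conjugate z"
  using assms by (intro eq_vecI) (auto simp: scalar_prod_def cnj_sum)

lemma symmetric_real_mat_has_eigenvalue:
  fixes M :: "real mat"
  assumes M: "M \<in> carrier_mat n n" and sym: "transpose_mat M = M" and n: "n > 0"
  shows "\<exists>e. eigenvalue M e"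
proof -
  let ?Mc = "map_mat complex_of_real M"
  have Mc: "?Mc \<in> carrier_mat n n" using M by simp
  obtain as where "char_poly ?Mc = (\<Prod>a\<leftarrow>as. [:- a, 1:])" and "length as = n"
    using char_poly_factorized[OF Mc] by blast
  with n obtain a where "poly (char_poly ?Mc) a = 0" by (cases as) auto
  then obtain z where z: "z \<in> carrier_vec n" "z \<noteq> 0\<^sub>v n" and eig: "?Mc *\<^sub>v z = a \<cdot>\<^sub>v z"
    using eigenvalue_root_char_poly[OF Mc] Mc unfolding eigenvalue_def eigenvector_def by auto
  \<comment> \<open>z^H M z is both a |z|^2 and, as M is real symmetric, cnj a |z|^2\<close>
  have "a * (conjugate z \<bullet> z) = conjugate z \<bullet> (?Mc *\<^sub>v z)"
    using z by (simp add: eig)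
  also have "\<dots> = (transpose_mat ?Mc *\<^sub>v conjugate z) \<bullet> z"
    using transpose_vec_mult_scalar[OF Mc z(1), of "conjugate z"] z by simp
  also have "\<dots> = conjugate (a \<cdot>\<^sub>v z) \<bullet> z"
    using conjugate_of_real_mat_mult_vec[OF M z(1)] sym eig by (simp add: map_mat_transpose)
  also have "\<dots> = cnj a * (conjugate z \<bullet> z)"
    using z by (simp add: conjugate_smult_vec)
  finally have "a = cnj a"
    using z conjugate_vec_sprod_comm[OF z(1) z(1)] conjugate_square_greater_0_vec[OF z(1)] by auto
  then have a: "a = complex_of_real (Re a)"
    by (simp add: complex_eq_iff)
  have "complex_of_real (poly (char_poly M) (Re a)) = poly (char_poly ?Mc) a"
    by (subst a) (simp add: of_real_hom.char_poly_hom[OF M] of_real_hom.poly_map_poly)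
  then have "poly (char_poly M) (Re a) = 0"
    using \<open>poly (char_poly ?Mc) a = 0\<close> by simp
  then show ?thesis
    using eigenvalue_root_char_poly[OF M] by blast
qed

lemma eigenvalue_unit_eigenvector:
  fixes M :: "real mat"
  assumes M: "M \<in> carrier_mat n n" and "eigenvalue M e"
  shows "\<exists>u \<in> carrier_vec n. u \<bullet> u = 1 \<and> M *\<^sub>v u = e \<cdot>\<^sub>v u"
proof -
  obtain v where v: "v \<in> carrier_vec n" "v \<noteq> 0\<^sub>v n" and Mv: "M *\<^sub>v v = e \<cdot>\<^sub>v v"
    using assms unfolding eigenvalue_def eigenvector_def by auto
  have pos: "v \<bullet> v > 0"
    using conjugate_square_greater_0_vec[OF v(1)] v by simp
  define u where "u = (1 / sqrt (v \<bullet> v)) \<cdot>\<^sub>v v"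
  have "u \<bullet> u = 1"
    using v pos by (simp add: u_def real_sqrt_mult[symmetric])
  moreover have "M *\<^sub>v u = e \<cdot>\<^sub>v u"
    using M v Mv by (simp add: u_def mult_mat_vec smult_smult_assoc mult.commute)
  ultimately show ?thesis
    using v by (auto simp: u_def)
qed

lemma orthogonal_mat_with_first_col:
  fixes u :: "real vec"
  assumes u: "u \<in> carrier_vec n" and unit: "u \<bullet> u = 1"
  shows "\<exists>W \<in> carrier_mat n n. transpose_mat W * W = 1\<^sub>m n \<and> col W 0 = u"
proof -
  interpret cof_vec_space n "TYPE(real)" .
  have "u \<noteq> 0\<^sub>v n" using u unit by auto
  note bc = basis_completion[OF u this]
  obtain vs where b: "basis_completion u = u # vs"
    unfolding basis_completion_def Let_def by simp
  define gs where "gs = gram_schmidt n (basis_completion u)"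
  note gr = gram_schmidt_result[OF bc(2) bc(4) bc(5) gs_def]
  have len: "length gs = n" and gs: "\<And>i. i < n \<Longrightarrow> gs ! i \<in> carrier_vec n"
    using gr(3,4) bc(6) by auto
  have orth: "\<And>i j. i < n \<Longrightarrow> j < n \<Longrightarrow> gs ! i \<bullet> gs ! j = 0 \<longleftrightarrow> i \<noteq> j"
    using corthogonalD[OF gr(2)] len by simp
  have "n > 0" using u \<open>u \<noteq> 0\<^sub>v n\<close> by (cases n) auto
  then have gs0: "gs ! 0 = u"
    using gram_schmidt_hd[OF u, of vs] len unfolding gs_def b by (cases "gram_schmidt n (u # vs)") auto
  define W where "W = mat n n (\<lambda>(i, j). gs ! j $ i / sqrt (gs ! j \<bullet> gs ! j))"
  have colW: "col W j = (1 / sqrt (gs ! j \<bullet> gs ! j)) \<cdot>\<^sub>v gs ! j" if "j < n" for j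
    using gs[OF that] that unfolding W_def by (intro eq_vecI) auto
  have "transpose_mat W * W = 1\<^sub>m n"
  proof (rule eq_matI)
    fix i j assume "i < dim_row (1\<^sub>m n)" "j < dim_col (1\<^sub>m n)"
    then have ij: "i < n" "j < n" by auto
    have pos: "gs ! k \<bullet> gs ! k > 0" if "k < n" for k
      using orth[OF that that] conjugate_square_greater_0_vec[OF gs[OF that]] gs[OF that] by auto
    show "(transpose_mat W * W) $$ (i, j) = 1\<^sub>m n $$ (i, j)"
      using ij colW[OF ij(1)] colW[OF ij(2)] gs[OF ij(1)] gs[OF ij(2)] orth[OF ij] pos[OF ij(1)]
      by (auto simp: W_def real_sqrt_mult[symmetric])
  qed (auto simp: W_def)
  moreover have "col W 0 = u"
    using colW[OF \<open>n > 0\<close>] gs0 unit u by simp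
  ultimately show ?thesis unfolding W_def by auto
qed

lemma mult_block_diag_mat:
  assumes "A1 \<in> carrier_mat k k" "A2 \<in> carrier_mat m m" "B1 \<in> carrier_mat k k" "B2 \<in> carrier_mat m m"
  shows "four_block_mat A1 (0\<^sub>m k m) (0\<^sub>m m k) A2 * four_block_mat B1 (0\<^sub>m k m) (0\<^sub>m m k) B2
    = four_block_mat (A1 * B1) (0\<^sub>m k m) (0\<^sub>m m k) (A2 * B2)"
  using assms by (simp add: mult_four_block_mat[of _ k k _ m _ m _ _ k _ m])

lemma transpose_block_diag_mat:
  assumes "A1 \<in> carrier_mat k k" "A2 \<in> carrier_mat m m"
  shows "transpose_mat (four_block_mat A1 (0\<^sub>m k m) (0\<^sub>m m k) A2)
    = four_block_mat (transpose_mat A1) (0\<^sub>m k m) (0\<^sub>m m k) (transpose_mat A2)"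
  using transpose_four_block_mat[OF assms(1) zero_carrier_mat zero_carrier_mat assms(2)] by simp

lemma diagonal_block_diag_mat:
  assumes "A1 \<in> carrier_mat k k" "A2 \<in> carrier_mat m m" "diagonal_mat A1" "diagonal_mat A2"
  shows "diagonal_mat (four_block_mat A1 (0\<^sub>m k m) (0\<^sub>m m k) A2)"
  using assms unfolding diagonal_mat_def by auto

lemma transpose_mult_congruence:
  fixes P Q M :: "'a::comm_ring_1 mat"
  assumes P: "P \<in> carrier_mat n n" and Q: "Q \<in> carrier_mat n n" and M: "M \<in> carrier_mat n n"
  shows "transpose_mat (P * Q) * M * (P * Q) = transpose_mat Q * (transpose_mat P * M * P) * Q"
proof -
  have Pt: "transpose_mat P \<in> carrier_mat n n" and Qt: "transpose_mat Q \<in> carrier_mat n n"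
    using P Q by auto
  have "transpose_mat (P * Q) * M * (P * Q) = transpose_mat Q * transpose_mat P * M * P * Q"
    using P Q M Pt Qt by (simp add: transpose_mult assoc_mult_mat[of _ n n _ n _ n])
  also have "\<dots> = transpose_mat Q * (transpose_mat P * M * P) * Q"
    using P Q M Pt Qt by (simp add: assoc_mult_mat[of _ n n _ n _ n])
  finally show ?thesis .
qed

lemma orthogonal_mat_mult:
  fixes P Q :: "'a::comm_ring_1 mat"
  assumes P: "P \<in> carrier_mat n n" and Q: "Q \<in> carrier_mat n n"
    and "transpose_mat P * P = 1\<^sub>m n" and "transpose_mat Q * Q = 1\<^sub>m n"
  shows "transpose_mat (P * Q) * (P * Q) = 1\<^sub>m n"
  using transpose_mult_congruence[OF P Q one_carrier_mat] assms by simp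

lemma orthogonal_congruence_first_col_eigenvector:
  fixes M W :: "real mat"
  assumes M: "M \<in> carrier_mat (Suc m) (Suc m)" and sym: "transpose_mat M = M"
    and W: "W \<in> carrier_mat (Suc m) (Suc m)" and orth: "transpose_mat W * W = 1\<^sub>m (Suc m)"
    and eig: "M *\<^sub>v col W 0 = e \<cdot>\<^sub>v col W 0"
  shows "\<exists>N \<in> carrier_mat m m. transpose_mat N = N \<and>
    transpose_mat W * M * W = four_block_mat (e \<cdot>\<^sub>m 1\<^sub>m 1) (0\<^sub>m 1 m) (0\<^sub>m m 1) N"
proof -
  define C where "C = transpose_mat W * M * W"
  have C: "C \<in> carrier_mat (Suc m) (Suc m)" using M W by (simp add: C_def)
  have Wt: "transpose_mat W \<in> carrier_mat (Suc m) (Suc m)" using W by simp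
  have C_entry: "C $$ (i, j) = col W i \<bullet> (M *\<^sub>v col W j)" if ij: "i < Suc m" "j < Suc m" for i j
  proof -
    have "C $$ (i, j) = row (transpose_mat W) i \<bullet> col (M * W) j"
      unfolding C_def assoc_mult_mat[OF Wt M W] using ij W M by (intro index_mult_mat(1)) auto
    also have "row (transpose_mat W) i = col W i"
      using ij W by (intro row_transpose) simp
    also have "col (M * W) j = M *\<^sub>v col W j"
      by (rule col_mult2[OF M W ij(2)])
    finally show ?thesis .
  qed
  have C_sym: "C $$ (j, i) = C $$ (i, j)" if "i < Suc m" "j < Suc m" for i j
  proof -
    have "col W i \<in> carrier_vec (Suc m)" "col W j \<in> carrier_vec (Suc m)"
      using that W by auto
    then show ?thesis
      unfolding C_entry[OF that] C_entry[OF that(2,1)] by (rule scalar_prod_sym_mat_comm[OF M sym, symmetric])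
  qed
  have "C $$ (i, 0) = (transpose_mat W * W) $$ (i, 0) * e" if "i < Suc m" for i
    using that W C_entry by (simp add: eig)
  then have C_col0: "C $$ (i, 0) = (if i = 0 then e else 0)" if "i < Suc m" for i
    using that by (simp add: orth)
  define N where "N = mat m m (\<lambda>(i, j). C $$ (Suc i, Suc j))"
  have "C = four_block_mat (e \<cdot>\<^sub>m 1\<^sub>m 1) (0\<^sub>m 1 m) (0\<^sub>m m 1) N"
  proof (rule eq_matI)
    fix i j assume "i < dim_row (four_block_mat (e \<cdot>\<^sub>m 1\<^sub>m 1) (0\<^sub>m 1 m) (0\<^sub>m m 1) N)"
      "j < dim_col (four_block_mat (e \<cdot>\<^sub>m 1\<^sub>m 1) (0\<^sub>m 1 m) (0\<^sub>m m 1) N)"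
    then have ij: "i < Suc m" "j < Suc m" by (auto simp: N_def)
    then show "C $$ (i, j) = four_block_mat (e \<cdot>\<^sub>m 1\<^sub>m 1) (0\<^sub>m 1 m) (0\<^sub>m m 1) N $$ (i, j)"
      using C_col0[OF ij(1)] C_col0[OF ij(2)] C_sym[OF ij]
      by (cases i; cases j) (auto simp: N_def)
  qed (use C in \<open>auto simp: N_def\<close>)
  moreover have "transpose_mat N = N"
    using C_sym by (intro eq_matI) (auto simp: N_def)
  moreover have "N \<in> carrier_mat m m" by (simp add: N_def)
  ultimately show ?thesis
    unfolding C_def[symmetric] by blast
qed

lemma orthogonal_diagonalization_block_extend:
  fixes N R :: "real mat"
  assumes N: "N \<in> carrier_mat m m" and R: "R \<in> carrier_mat m m"
    and R_orth: "transpose_mat R * R = 1\<^sub>m m" and R_diag: "diagonal_mat (transpose_mat R * N * R)"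
  shows "\<exists>Q \<in> carrier_mat (Suc m) (Suc m). transpose_mat Q * Q = 1\<^sub>m (Suc m) \<and>
    diagonal_mat (transpose_mat Q * four_block_mat (e \<cdot>\<^sub>m 1\<^sub>m 1) (0\<^sub>m 1 m) (0\<^sub>m m 1) N * Q)"
proof -
  define Q where "Q = four_block_mat (1\<^sub>m 1) (0\<^sub>m 1 m) (0\<^sub>m m 1) R"
  have Q: "Q \<in> carrier_mat (Suc m) (Suc m)"
    using four_block_carrier_mat[OF one_carrier_mat[of 1] R, of "0\<^sub>m 1 m" "0\<^sub>m m 1"]
    by (simp add: Q_def)
  have "transpose_mat Q * four_block_mat (e \<cdot>\<^sub>m 1\<^sub>m 1) (0\<^sub>m 1 m) (0\<^sub>m m 1) N * Q
    = four_block_mat (e \<cdot>\<^sub>m 1\<^sub>m 1) (0\<^sub>m 1 m) (0\<^sub>m m 1) (transpose_mat R * N * R)"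
    using R N by (simp add: Q_def transpose_block_diag_mat mult_block_diag_mat)
  moreover have "diagonal_mat (e \<cdot>\<^sub>m 1\<^sub>m 1)"
    by (simp add: diagonal_mat_def)
  ultimately have "diagonal_mat (transpose_mat Q * four_block_mat (e \<cdot>\<^sub>m 1\<^sub>m 1) (0\<^sub>m 1 m) (0\<^sub>m m 1) N * Q)"
    using R N R_diag by (simp add: diagonal_block_diag_mat)
  moreover have "transpose_mat Q * Q = 1\<^sub>m (Suc m)"
    using R R_orth by (simp add: Q_def transpose_block_diag_mat mult_block_diag_mat)
  ultimately show ?thesis
    using Q by blast
qed

theorem symmetric_real_mat_orthogonally_diagonalizable:
  fixes M :: "real mat"
  assumes "M \<in> carrier_mat n n" and "transpose_mat M = M"
  shows "\<exists>P \<in> carrier_mat n n. transpose_mat P * P = 1\<^sub>m n \<and> diagonal_mat (transpose_mat P * M * P)"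
  using assms
proof (induction n arbitrary: M)
  case 0
  then show ?case by (intro bexI[of _ "1\<^sub>m 0"]) (auto simp: diagonal_mat_def)
next
  case (Suc m)
  note M = Suc.prems(1) and sym = Suc.prems(2)
  obtain e where "eigenvalue M e"
    using symmetric_real_mat_has_eigenvalue[OF M sym] by auto
  then obtain u where u: "u \<in> carrier_vec (Suc m)" "u \<bullet> u = 1" and Mu: "M *\<^sub>v u = e \<cdot>\<^sub>v u"
    using eigenvalue_unit_eigenvector[OF M] by blast
  obtain W where W: "W \<in> carrier_mat (Suc m) (Suc m)" and W_orth: "transpose_mat W * W = 1\<^sub>m (Suc m)"
    and W_col: "col W 0 = u"
    using orthogonal_mat_with_first_col[OF u] by blast
  obtain N where N: "N \<in> carrier_mat m m" "transpose_mat N = N"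
    and WMW: "transpose_mat W * M * W = four_block_mat (e \<cdot>\<^sub>m 1\<^sub>m 1) (0\<^sub>m 1 m) (0\<^sub>m m 1) N"
    using orthogonal_congruence_first_col_eigenvector[OF M sym W W_orth] Mu W_col by blast
  obtain R where R: "R \<in> carrier_mat m m" and R_orth: "transpose_mat R * R = 1\<^sub>m m"
    and R_diag: "diagonal_mat (transpose_mat R * N * R)"
    using Suc.IH[OF N] by blast
  obtain Q where Q: "Q \<in> carrier_mat (Suc m) (Suc m)" and Q_orth: "transpose_mat Q * Q = 1\<^sub>m (Suc m)"
    and Q_diag: "diagonal_mat
      (transpose_mat Q * four_block_mat (e \<cdot>\<^sub>m 1\<^sub>m 1) (0\<^sub>m 1 m) (0\<^sub>m m 1) N * Q)"
    using orthogonal_diagonalization_block_extend[OF N(1) R R_orth R_diag] by blast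
  show ?case
  proof (intro bexI[of _ "W * Q"] conjI)
    show "transpose_mat (W * Q) * (W * Q) = 1\<^sub>m (Suc m)"
      by (rule orthogonal_mat_mult[OF W Q W_orth Q_orth])
    show "diagonal_mat (transpose_mat (W * Q) * M * (W * Q))"
      unfolding transpose_mult_congruence[OF W Q M] WMW by (rule Q_diag)
  qed (use W Q in simp)
qed

lemma orthogonal_mat_right_inverse:
  fixes P :: "'a::field mat"
  assumes P: "P \<in> carrier_mat n n" and orth: "transpose_mat P * P = 1\<^sub>m n"
  shows "P * transpose_mat P = 1\<^sub>m n"
  using mat_mult_left_right_inverse[OF _ P orth] P by simp

lemma orthogonal_congruence_inverse:
  fixes P M :: "'a::field mat"
  assumes P: "P \<in> carrier_mat n n" and M: "M \<in> carrier_mat n n"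
    and orth: "transpose_mat P * P = 1\<^sub>m n"
  shows "P * (transpose_mat P * M * P) * transpose_mat P = M"
proof -
  have Pt: "transpose_mat P \<in> carrier_mat n n" using P by simp
  have PPt: "P * transpose_mat P = 1\<^sub>m n" by (rule orthogonal_mat_right_inverse[OF P orth])
  have "P * (transpose_mat P * M) = M"
    using assoc_mult_mat[OF P Pt M, symmetric] PPt M by simp
  then show ?thesis
    using P M Pt PPt by (simp add: assoc_mult_mat[of _ n n _ n _ n])
qed

lemma det_orthogonal_congruence:
  fixes P M :: "'a::field mat"
  assumes P: "P \<in> carrier_mat n n" and M: "M \<in> carrier_mat n n"
    and orth: "transpose_mat P * P = 1\<^sub>m n"
  shows "det (transpose_mat P * M * P) = det M"
proof -
  have Pt: "transpose_mat P \<in> carrier_mat n n" using P by simp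
  have "det (transpose_mat P * M * P) = det M * det (transpose_mat P * P)"
    using Pt M P by (simp add: det_mult[of _ n])
  then show ?thesis
    using orth by simp
qed

lemma order_prod_linear_factors:
  fixes a :: "'a::idom"
  shows "Polynomial.order a (\<Prod>x\<leftarrow>xs. [:- x, 1:]) = length (filter ((=) a) xs)"
proof (induction xs)
  case (Cons x xs)
  have "monic (\<Prod>x\<leftarrow>x # xs. [:- x, 1:])"
    by (rule monic_prod_list) auto
  then have "(\<Prod>x\<leftarrow>x # xs. [:- x, 1:]) \<noteq> 0"
    by auto
  then have "Polynomial.order a (\<Prod>x\<leftarrow>x # xs. [:- x, 1:])
      = Polynomial.order a [:- x, 1:] + Polynomial.order a (\<Prod>x\<leftarrow>xs. [:- x, 1:])"
    unfolding list.map prod_list.Cons by (rule order_mult)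
  moreover have "Polynomial.order a [:- x, 1:] = (if a = x then 1 else 0)"
    using order_power_n_n[of x 1] by (auto intro: order_0I)
  ultimately show ?case
    unfolding Cons.IH by simp
qed simp

lemma alg_mult_orthogonal_diagonalization:
  fixes M P :: "real mat"
  assumes M: "M \<in> carrier_mat n n" and P: "P \<in> carrier_mat n n"
    and orth: "transpose_mat P * P = 1\<^sub>m n" and diag: "diagonal_mat (transpose_mat P * M * P)"
  shows "alg_mult M a = card {i. i < n \<and> (transpose_mat P * M * P) $$ (i, i) = a}"
proof -
  define D where "D = transpose_mat P * M * P"
  have D: "D \<in> carrier_mat n n" using M P by (simp add: D_def)
  have "similar_mat_wit M D P (transpose_mat P)"
    using orthogonal_mat_right_inverse[OF P orth] orth
      orthogonal_congruence_inverse[OF P M orth, folded D_def, symmetric] M D P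
    by (rule similar_mat_witI) (use P in simp)
  then have sim: "similar_mat M D"
    unfolding similar_mat_def by blast
  have "upper_triangular D"
    using diag[folded D_def] D unfolding upper_triangular_def diagonal_mat_def by auto
  then have "char_poly M = (\<Prod>a\<leftarrow>diag_mat D. [:- a, 1:])"
    unfolding char_poly_similar[OF sim] by (rule char_poly_upper_triangular[OF D])
  then have "alg_mult M a = length (filter ((=) a) (diag_mat D))"
    unfolding alg_mult_def by (simp only: order_prod_linear_factors)
  also have "\<dots> = card {i. i < n \<and> D $$ (i, i) = a}"
    unfolding length_filter_conv_card using D by (intro arg_cong[where f = card]) (auto simp: diag_mat_def)
  finally show ?thesis unfolding D_def .
qed

lemma eigenvalue_iff_alg_mult_nonzero:
  assumes "M \<in> carrier_mat n n"
  shows "eigenvalue M a \<longleftrightarrow> alg_mult M a \<noteq> 0"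
proof -
  have "char_poly M \<noteq> 0"
    using degree_monic_char_poly[OF assms] by auto
  then show ?thesis
    unfolding eigenvalue_root_char_poly[OF assms] alg_mult_def by (simp add: order_root)
qed

lemma quadratic_form_diagonal:
  fixes D :: "'a::comm_ring_1 mat"
  assumes D: "D \<in> carrier_mat n n" and diag: "diagonal_mat D" and y: "y \<in> carrier_vec n"
  shows "y \<bullet> (D *\<^sub>v y) = (\<Sum>i<n. D $$ (i, i) * (y $ i)\<^sup>2)"
proof -
  have "D *\<^sub>v y = vec n (\<lambda>i. D $$ (i, i) * y $ i)"
  proof (rule eq_vecI)
    fix i assume "i < dim_vec (vec n (\<lambda>i. D $$ (i, i) * y $ i))"
    then have i: "i < n" by simp
    have "(D *\<^sub>v y) $ i = (\<Sum>j\<in>{0..<n}. D $$ (i, j) * y $ j)"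
      using D y i by (simp add: scalar_prod_def)
    also have "\<dots> = (\<Sum>j\<in>{0..<n}. if j = i then D $$ (i, i) * y $ i else 0)"
      using D i diag unfolding diagonal_mat_def by (intro sum.cong) auto
    finally show "(D *\<^sub>v y) $ i = vec n (\<lambda>i. D $$ (i, i) * y $ i) $ i"
      using i by simp
  qed (use D in simp)
  then show ?thesis
    using y by (simp add: scalar_prod_def power2_eq_square lessThan_atLeast0 ac_simps)
qed

lemma quadratic_form_orthogonal_diagonalization:
  fixes M P :: "'a::field mat"
  assumes M: "M \<in> carrier_mat n n" and P: "P \<in> carrier_mat n n"
    and orth: "transpose_mat P * P = 1\<^sub>m n" and diag: "diagonal_mat (transpose_mat P * M * P)"
    and x: "x \<in> carrier_vec n"
  shows "x \<bullet> (M *\<^sub>v x) = (\<Sum>i<n. (transpose_mat P * M * P) $$ (i, i) * ((transpose_mat P *\<^sub>v x) $ i)\<^sup>2)"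
proof -
  define D where "D = transpose_mat P * M * P"
  define y where "y = transpose_mat P *\<^sub>v x"
  have D: "D \<in> carrier_mat n n" and y: "y \<in> carrier_vec n"
    using M P x by (simp_all add: D_def y_def)
  have Pt: "transpose_mat P \<in> carrier_mat n n" using P by simp
  have "M *\<^sub>v x = (P * D * transpose_mat P) *\<^sub>v x"
    using orthogonal_congruence_inverse[OF P M orth] by (simp add: D_def)
  also have "\<dots> = P *\<^sub>v (D *\<^sub>v y)"
    using P D x by (simp add: y_def Pt assoc_mult_mat_vec[of _ n n _ n])
  finally have Mx: "M *\<^sub>v x = P *\<^sub>v (D *\<^sub>v y)" .
  have "x \<bullet> (M *\<^sub>v x) = y \<bullet> (D *\<^sub>v y)"
    unfolding Mx using transpose_vec_mult_scalar[OF P _ x, of "D *\<^sub>v y"] D y by (simp add: y_def)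
  also have "\<dots> = (\<Sum>i<n. D $$ (i, i) * (y $ i)\<^sup>2)"
    by (rule quadratic_form_diagonal[OF D diag[folded D_def] y])
  finally show ?thesis unfolding D_def y_def .
qed

section \<open>Symmetric matrices with one simple negative eigenvalue\<close>

lemma simple_negative_eigenvalue_inertia:
  fixes B :: "real mat"
  assumes B: "B \<in> carrier_mat n n" and sym: "transpose_mat B = B" and inv: "invertible_mat B"
    and neg: "\<exists>l. l < 0 \<and> eigenvalue B l \<and> alg_mult B l = 1 \<and>
                  (\<forall>m. m < 0 \<and> eigenvalue B m \<longrightarrow> m = l)"
  obtains P k where "P \<in> carrier_mat n n" "transpose_mat P * P = 1\<^sub>m n"
    "diagonal_mat (transpose_mat P * B * P)" "k < n" "(transpose_mat P * B * P) $$ (k, k) < 0"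
    "\<And>i. i < n \<Longrightarrow> i \<noteq> k \<Longrightarrow> (transpose_mat P * B * P) $$ (i, i) > 0"
proof -
  obtain l where l: "l < 0" "alg_mult B l = 1" and l_unique: "\<And>m. m < 0 \<Longrightarrow> eigenvalue B m \<Longrightarrow> m = l"
    using neg by blast
  obtain P where P: "P \<in> carrier_mat n n" and orth: "transpose_mat P * P = 1\<^sub>m n"
    and diag: "diagonal_mat (transpose_mat P * B * P)"
    using symmetric_real_mat_orthogonally_diagonalizable[OF B sym] by blast
  define D where "D = transpose_mat P * B * P"
  have mult: "alg_mult B a = card {i. i < n \<and> D $$ (i, i) = a}" for a
    unfolding D_def by (rule alg_mult_orthogonal_diagonalization[OF B P orth diag])
  have "card {i. i < n \<and> D $$ (i, i) = l} = 1"
    using l(2) mult[of l] by simp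
  then obtain k where k: "{i. i < n \<and> D $$ (i, i) = l} = {k}"
    by (rule card_1_singletonE)
  have pos: "D $$ (i, i) > 0" if i: "i < n" "i \<noteq> k" for i
  proof -
    have "finite {j. j < n \<and> D $$ (j, j) = D $$ (i, i)}" by simp
    then have "alg_mult B (D $$ (i, i)) \<noteq> 0"
      unfolding mult using i(1) by (auto simp: card_eq_0_iff)
    then have eig: "eigenvalue B (D $$ (i, i))"
      using eigenvalue_iff_alg_mult_nonzero[OF B] by blast
    then have "D $$ (i, i) \<noteq> 0"
      using invertible_mat_not_eigenvalue_0[OF B inv] by auto
    moreover have "D $$ (i, i) \<noteq> l"
      using i k by blast
    then have "\<not> D $$ (i, i) < 0"
      using l_unique eig by blast
    ultimately show ?thesis by linarith
  qed
  have "k \<in> {i. i < n \<and> D $$ (i, i) = l}"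
    unfolding k by simp
  then have "k < n" "D $$ (k, k) < 0"
    using l(1) by auto
  with pos show thesis
    using that[OF P orth diag] unfolding D_def by simp
qed

lemma det_neg_if_one_negative_diagonal_entry:
  fixes M P :: "real mat"
  assumes M: "M \<in> carrier_mat n n" and P: "P \<in> carrier_mat n n"
    and orth: "transpose_mat P * P = 1\<^sub>m n" and diag: "diagonal_mat (transpose_mat P * M * P)"
    and k: "k < n" and neg: "(transpose_mat P * M * P) $$ (k, k) < 0"
    and pos: "\<And>i. i < n \<Longrightarrow> i \<noteq> k \<Longrightarrow> (transpose_mat P * M * P) $$ (i, i) > 0"
  shows "det M < 0"
proof -
  define D where "D = transpose_mat P * M * P"
  have D: "D \<in> carrier_mat n n" using M P by (simp add: D_def)
  have "upper_triangular D"
    using diag[folded D_def] D unfolding upper_triangular_def diagonal_mat_def by auto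
  then have "det D = (\<Prod>i = 0..<n. D $$ (i, i))"
    using det_upper_triangular[OF _ D] D by (simp add: prod_list_diag_prod)
  also have "\<dots> = D $$ (k, k) * (\<Prod>i \<in> {0..<n} - {k}. D $$ (i, i))"
    using k by (subst prod.remove[of _ k]) auto
  also have "\<dots> < 0"
  proof (rule mult_neg_pos)
    show "D $$ (k, k) < 0" using neg by (simp add: D_def)
    show "(\<Prod>i \<in> {0..<n} - {k}. D $$ (i, i)) > 0"
      using pos by (intro prod_pos) (auto simp: D_def)
  qed
  finally show ?thesis
    using det_orthogonal_congruence[OF P M orth] by (simp add: D_def)
qed

text \<open>No plane is negative definite for the quadratic form of M, i.e. the form has at most one
  negative square.\<close>

definition negative_index_le_1 :: "nat \<Rightarrow> real mat \<Rightarrow> bool" where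
  "negative_index_le_1 n M \<longleftrightarrow> (\<forall>v \<in> carrier_vec n. \<forall>w \<in> carrier_vec n. \<exists>a b. (a, b) \<noteq> (0, 0) \<and>
     (a \<cdot>\<^sub>v v + b \<cdot>\<^sub>v w) \<bullet> (M *\<^sub>v (a \<cdot>\<^sub>v v + b \<cdot>\<^sub>v w)) \<ge> 0)"

lemma negative_index_le_1_if_one_nonpos_diagonal_entry:
  fixes M P :: "real mat"
  assumes M: "M \<in> carrier_mat n n" and P: "P \<in> carrier_mat n n"
    and orth: "transpose_mat P * P = 1\<^sub>m n" and diag: "diagonal_mat (transpose_mat P * M * P)"
    and nonneg: "\<And>i. i < n \<Longrightarrow> i \<noteq> k \<Longrightarrow> (transpose_mat P * M * P) $$ (i, i) \<ge> 0"
  shows "negative_index_le_1 n M"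
  unfolding negative_index_le_1_def
proof (intro ballI)
  fix v w :: "real vec" assume v: "v \<in> carrier_vec n" and w: "w \<in> carrier_vec n"
  have Pt: "transpose_mat P \<in> carrier_mat n n" using P by simp
  define c d where "c = (transpose_mat P *\<^sub>v v) $ k" and "d = (transpose_mat P *\<^sub>v w) $ k"
  \<comment> \<open>only the k-th diagonal entry may be negative, so kill the k-th coordinate of P^T x\<close>
  obtain a b where ab: "(a, b) \<noteq> (0, 0)" and abk: "a * c + b * d = 0"
  proof (cases "c = 0 \<and> d = 0")
    case True
    then show ?thesis using that[of 1 0] by simp
  next
    case False
    show ?thesis
      by (rule that[of d "- c"]) (use False in \<open>auto simp: algebra_simps\<close>)
  qed
  define x where "x = a \<cdot>\<^sub>v v + b \<cdot>\<^sub>v w"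
  have x: "x \<in> carrier_vec n" using v w by (simp add: x_def)
  have "transpose_mat P *\<^sub>v x = a \<cdot>\<^sub>v (transpose_mat P *\<^sub>v v) + b \<cdot>\<^sub>v (transpose_mat P *\<^sub>v w)"
    using Pt v w by (simp add: x_def mult_add_distrib_mat_vec[of _ n n] mult_mat_vec[of _ n n])
  then have "(transpose_mat P *\<^sub>v x) $ k = 0" if "k < n"
    using that abk Pt v w by (simp add: c_def d_def)
  then have "(transpose_mat P * M * P) $$ (i, i) * ((transpose_mat P *\<^sub>v x) $ i)\<^sup>2 \<ge> 0"
    if "i < n" for i
    using that nonneg[of i] by (cases "i = k") auto
  then have "x \<bullet> (M *\<^sub>v x) \<ge> 0"
    using quadratic_form_orthogonal_diagonalization[OF M P orth diag x] by (auto intro!: sum_nonneg)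
  then show "\<exists>a b. (a, b) \<noteq> (0, 0) \<and> (a \<cdot>\<^sub>v v + b \<cdot>\<^sub>v w) \<bullet> (M *\<^sub>v (a \<cdot>\<^sub>v v + b \<cdot>\<^sub>v w)) \<ge> 0"
    using ab unfolding x_def by blast
qed

lemma simple_negative_eigenvalue_det_neg_index_le_1:
  fixes B :: "real mat"
  assumes B: "B \<in> carrier_mat n n" and sym: "transpose_mat B = B" and inv: "invertible_mat B"
    and neg: "\<exists>l. l < 0 \<and> eigenvalue B l \<and> alg_mult B l = 1 \<and>
                  (\<forall>m. m < 0 \<and> eigenvalue B m \<longrightarrow> m = l)"
  shows "det B < 0" and "negative_index_le_1 n B"
proof -
  obtain P k where P: "P \<in> carrier_mat n n" "transpose_mat P * P = 1\<^sub>m n"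
    "diagonal_mat (transpose_mat P * B * P)" and k: "k < n" "(transpose_mat P * B * P) $$ (k, k) < 0"
    and pos: "\<And>i. i < n \<Longrightarrow> i \<noteq> k \<Longrightarrow> (transpose_mat P * B * P) $$ (i, i) > 0"
    using simple_negative_eigenvalue_inertia[OF B sym inv neg] by blast
  show "det B < 0"
    by (rule det_neg_if_one_negative_diagonal_entry[OF B P k pos])
  show "negative_index_le_1 n B"
    by (rule negative_index_le_1_if_one_nonpos_diagonal_entry[OF B P, of k]) (simp add: less_imp_le pos)
qed

section \<open>Sign of the determinant\<close>

lemma eigenvalue_uminus_mat:
  fixes M :: "'a::field mat"
  assumes M: "M \<in> carrier_mat n n" and "eigenvalue (- M) t"
  shows "eigenvalue M (- t)"
proof -
  obtain v where v: "v \<in> carrier_vec n" "v \<noteq> 0\<^sub>v n" and Mv: "(- M) *\<^sub>v v = t \<cdot>\<^sub>v v"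
    using assms unfolding eigenvalue_def eigenvector_def by auto
  have "M *\<^sub>v v = - ((- M) *\<^sub>v v)"
    using M v by (intro eq_vecI) auto
  also have "\<dots> = (- t) \<cdot>\<^sub>v v"
    unfolding Mv by (intro eq_vecI) auto
  finally show ?thesis
    using M v unfolding eigenvalue_def eigenvector_def by auto
qed

lemma nonpos_eigenvalue_if_det_nonpos:
  fixes M :: "real mat"
  assumes M: "M \<in> carrier_mat n n" and det: "det M \<le> 0"
  shows "\<exists>t \<le> 0. eigenvalue M t"
proof (rule ccontr)
  assume no_eig: "\<not> (\<exists>t \<le> 0. eigenvalue M t)"
  have uM: "- M \<in> carrier_mat n n" using M by simp
  \<comment> \<open>p t = det (M + t I); it has no root on [0, \<infinity>) but is monic and non-positive at 0\<close>
  define p where "p = char_poly (- M)"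
  have root: "poly p t = 0 \<Longrightarrow> t < 0" for t
    using no_eig eigenvalue_uminus_mat[OF M] eigenvalue_root_char_poly[OF uM]
    unfolding p_def by (metis neg_le_0_iff_le not_less)
  have "- char_matrix (- M) 0 = M"
    unfolding char_matrix_def using M by (intro eq_matI) auto
  then have "poly p 0 = det M"
    unfolding p_def char_poly_matrix[OF uM] by simp
  then have "poly p 0 < 0"
    using det root[of 0] by fastforce
  moreover obtain N where N: "\<And>x. x \<ge> N \<Longrightarrow> poly p x \<ge> 1"
    using poly_pinfty_gt_lc[of p] degree_monic_char_poly[OF uM] unfolding p_def by auto
  then have "poly p (max N 1) > 0"
    using N[OF max.cobounded1, of 1] by linarith
  ultimately obtain x where "0 < x" "poly p x = 0"
    using poly_IVT_pos[of 0 "max N 1" p] by (auto simp: less_max_iff_disj)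
  then show False
    using root by fastforce
qed

lemma det_pos_if_pos_def_sym_part:
  assumes A: "A \<in> carrier_mat n n" and A_pd: "pos_def_mat n (sym_part A)"
  shows "det A > 0"
proof (rule ccontr)
  assume "\<not> det A > 0"
  then obtain t where t: "t \<le> 0" "eigenvalue A t"
    using nonpos_eigenvalue_if_det_nonpos[OF A] by auto
  then obtain v where v: "v \<in> carrier_vec n" "v \<noteq> 0\<^sub>v n" and Av: "A *\<^sub>v v = t \<cdot>\<^sub>v v"
    using A unfolding eigenvalue_def eigenvector_def by auto
  have "0 < v \<bullet> (A *\<^sub>v v)"
    by (rule quadratic_form_pos[OF A A_pd v])
  also have "\<dots> = t * (v \<bullet> v)"
    using v by (simp add: Av)
  also have "\<dots> \<le> 0"
    using t(1) conjugate_square_ge_0_vec[of v] by (simp add: mult_nonpos_nonneg)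
  finally show False by simp
qed

lemma neg_eigenvalue_if_det_neg:
  fixes M :: "real mat"
  assumes M: "M \<in> carrier_mat n n" and det: "det M < 0"
  shows "\<exists>l < 0. eigenvalue M l"
proof -
  obtain t where t: "t \<le> 0" "eigenvalue M t"
    using nonpos_eigenvalue_if_det_nonpos[OF M] det by auto
  moreover have "t \<noteq> 0"
    using t(2) invertible_mat_not_eigenvalue_0[OF M] invertible_mat_iff_det_nonzero[OF M] det by auto
  ultimately show ?thesis
    by (auto simp: less_le)
qed

section \<open>Eigenvectors of A B with negative eigenvalues\<close>

lemma bilinear_form_two_vectors:
  fixes M :: "real mat"
  assumes M: "M \<in> carrier_mat n n" and sym: "transpose_mat M = M"
    and v: "v \<in> carrier_vec n" and w: "w \<in> carrier_vec n"
  shows "(a \<cdot>\<^sub>v v + b \<cdot>\<^sub>v w) \<bullet> (M *\<^sub>v (c \<cdot>\<^sub>v v + d \<cdot>\<^sub>v w))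
    = a * c * (v \<bullet> (M *\<^sub>v v)) + (a * d + b * c) * (v \<bullet> (M *\<^sub>v w)) + b * d * (w \<bullet> (M *\<^sub>v w))"
proof -
  have "M *\<^sub>v (c \<cdot>\<^sub>v v + d \<cdot>\<^sub>v w) = c \<cdot>\<^sub>v (M *\<^sub>v v) + d \<cdot>\<^sub>v (M *\<^sub>v w)"
    using M v w by (simp add: mult_add_distrib_mat_vec[of M n n] mult_mat_vec[of M n n])
  then show ?thesis
    using M v w scalar_prod_sym_mat_comm[OF M sym w v]
    by (simp add: add_scalar_prod_distrib[of _ n] scalar_prod_add_distrib[of _ n] algebra_simps)
qed

lemma binary_quadratic_form_neg:
  fixes l1 l2 p q r a b :: real
  assumes l1: "l1 < 0" and l2: "l2 < 0"
    and pos: "\<And>a b. (a, b) \<noteq> (0, 0) \<Longrightarrow>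
      a * (a * l1) * p + (a * (b * l2) + b * (a * l1)) * q + b * (b * l2) * r > 0"
    and ab: "(a, b) \<noteq> (0, 0)"
  shows "a * a * p + (a * b + b * a) * q + b * b * r < 0"
proof -
  have "l1 * p > 0"
    using pos[of 1 0] by simp
  then have p: "p < 0"
    using l1 by (simp add: zero_less_mult_iff)
  define x y where "x = - (l1 + l2) * q" and "y = 2 * l1 * p"
  \<comment> \<open>the hypothesis at (x, y) is the discriminant condition\<close>
  have "0 < x * (x * l1) * p + (x * (y * l2) + y * (x * l1)) * q + y * (y * l2) * r"
    using pos[of x y] l1 p by (simp add: y_def)
  also have "\<dots> = l1 * p * (4 * l1 * l2 * p * r - (l1 + l2)\<^sup>2 * q\<^sup>2)"
    unfolding x_def y_def by (simp add: algebra_simps power2_eq_square)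
  finally have disc: "(l1 + l2)\<^sup>2 * q\<^sup>2 < 4 * l1 * l2 * (p * r)"
    using mult_neg_neg[OF l1 p] by (simp add: zero_less_mult_iff)
  have "4 * l1 * l2 \<le> (l1 + l2)\<^sup>2"
    using sum_squares_ge_zero[of "l1 - l2" 0] by (simp add: power2_eq_square algebra_simps)
  then have lt: "(4 * l1 * l2) * q\<^sup>2 < (4 * l1 * l2) * (p * r)"
    using disc mult_right_mono[of "4 * l1 * l2" "(l1 + l2)\<^sup>2" "q\<^sup>2"] by simp
  have "4 * l1 * l2 > 0"
    using l1 l2 by (simp add: mult_neg_neg)
  with lt have pr: "q\<^sup>2 < p * r"
    using mult_less_cancel_left_pos by blast
  have "p * (a * a * p + (a * b + b * a) * q + b * b * r) = (p * a + q * b)\<^sup>2 + (p * r - q\<^sup>2) * b\<^sup>2"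
    by (simp add: algebra_simps power2_eq_square)
  also have "\<dots> > 0"
  proof (cases "b = 0")
    case True
    then show ?thesis using ab p by simp
  next
    case False
    then show ?thesis using pr by (simp add: add_nonneg_pos)
  qed
  finally show ?thesis
    using p by (simp add: zero_less_mult_iff)
qed

lemma neg_eigenvectors_of_product_negative_plane:
  fixes A B :: "real mat"
  assumes A: "A \<in> carrier_mat n n" and B: "B \<in> carrier_mat n n"
    and A_pd: "pos_def_mat n (sym_part A)" and B_sym: "transpose_mat B = B" and B_inv: "invertible_mat B"
    and v: "v \<in> carrier_vec n" and w: "w \<in> carrier_vec n"
    and ev: "(A * B) *\<^sub>v v = l1 \<cdot>\<^sub>v v" and ew: "(A * B) *\<^sub>v w = l2 \<cdot>\<^sub>v w"
    and l1: "l1 < 0" and l2: "l2 < 0"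
    and indep: "\<And>a b. a \<cdot>\<^sub>v v + b \<cdot>\<^sub>v w = 0\<^sub>v n \<Longrightarrow> (a, b) = (0, 0)"
    and ab: "(a, b) \<noteq> (0, 0)"
  shows "(a \<cdot>\<^sub>v v + b \<cdot>\<^sub>v w) \<bullet> (B *\<^sub>v (a \<cdot>\<^sub>v v + b \<cdot>\<^sub>v w)) < 0"
proof -
  define C where "C = A * B"
  have C: "C \<in> carrier_mat n n" using A B by (simp add: C_def)
  \<comment> \<open>for x = a v + b w, (B x) \<bullet> A (B x) > 0 and A (B x) = a l1 v + b l2 w\<close>
  have "a * (a * l1) * (v \<bullet> (B *\<^sub>v v)) + (a * (b * l2) + b * (a * l1)) * (v \<bullet> (B *\<^sub>v w))
      + b * (b * l2) * (w \<bullet> (B *\<^sub>v w)) > 0"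
    if ab: "(a, b) \<noteq> (0, 0)" for a b
  proof -
    define x where "x = a \<cdot>\<^sub>v v + b \<cdot>\<^sub>v w"
    define y where "y = (a * l1) \<cdot>\<^sub>v v + (b * l2) \<cdot>\<^sub>v w"
    have x: "x \<in> carrier_vec n" and y: "y \<in> carrier_vec n"
      using v w by (simp_all add: x_def y_def)
    have Bx: "B *\<^sub>v x \<in> carrier_vec n" "B *\<^sub>v x \<noteq> 0\<^sub>v n"
      using B x invertible_mat_kernel_trivial[OF B B_inv x] indep ab by (auto simp: x_def)
    have "A *\<^sub>v (B *\<^sub>v x) = C *\<^sub>v x"
      using A B x by (simp add: C_def)
    also have "\<dots> = y"
      using C v w ev[folded C_def] ew[folded C_def]
      by (simp add: x_def y_def mult_add_distrib_mat_vec[of C n n] mult_mat_vec[OF C] smult_smult_assoc)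
    finally have "0 < (B *\<^sub>v x) \<bullet> y"
      using quadratic_form_pos[OF A A_pd Bx] by simp
    also have "\<dots> = x \<bullet> (B *\<^sub>v y)"
      using comm_scalar_prod[OF Bx(1) y] scalar_prod_sym_mat_comm[OF B B_sym y x] by simp
    finally show ?thesis
      unfolding x_def y_def bilinear_form_two_vectors[OF B B_sym v w] .
  qed
  from binary_quadratic_form_neg[OF l1 l2 this ab] show ?thesis
    unfolding bilinear_form_two_vectors[OF B B_sym v w] .
qed

lemma neg_eigenvectors_of_product_dependent:
  fixes A B :: "real mat"
  assumes A: "A \<in> carrier_mat n n" and B: "B \<in> carrier_mat n n"
    and A_pd: "pos_def_mat n (sym_part A)" and B_sym: "transpose_mat B = B" and B_inv: "invertible_mat B"
    and B_index: "negative_index_le_1 n B"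
    and v: "v \<in> carrier_vec n" and w: "w \<in> carrier_vec n"
    and ev: "(A * B) *\<^sub>v v = l1 \<cdot>\<^sub>v v" and ew: "(A * B) *\<^sub>v w = l2 \<cdot>\<^sub>v w"
    and l1: "l1 < 0" and l2: "l2 < 0"
  shows "\<exists>a b. (a, b) \<noteq> (0, 0) \<and> a \<cdot>\<^sub>v v + b \<cdot>\<^sub>v w = 0\<^sub>v n"
proof (rule ccontr)
  assume "\<not> ?thesis"
  then have indep: "\<And>a b. a \<cdot>\<^sub>v v + b \<cdot>\<^sub>v w = 0\<^sub>v n \<Longrightarrow> (a, b) = (0, 0)"
    by blast
  obtain a b where ab: "(a, b) \<noteq> (0, 0)"
    and "(a \<cdot>\<^sub>v v + b \<cdot>\<^sub>v w) \<bullet> (B *\<^sub>v (a \<cdot>\<^sub>v v + b \<cdot>\<^sub>v w)) \<ge> 0"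
    using B_index v w unfolding negative_index_le_1_def by blast
  moreover have "(a \<cdot>\<^sub>v v + b \<cdot>\<^sub>v w) \<bullet> (B *\<^sub>v (a \<cdot>\<^sub>v v + b \<cdot>\<^sub>v w)) < 0"
    by (rule neg_eigenvectors_of_product_negative_plane[OF A B A_pd B_sym B_inv v w ev ew l1 l2 indep ab])
  ultimately show False
    by linarith
qed

lemma nonzero_dependent_vecs_proportional:
  fixes v w :: "'a::field vec"
  assumes v: "v \<in> carrier_vec n" "v \<noteq> 0\<^sub>v n" and w: "w \<in> carrier_vec n"
    and ab: "(a, b) \<noteq> (0, 0)" and dep: "a \<cdot>\<^sub>v v + b \<cdot>\<^sub>v w = 0\<^sub>v n"
  shows "\<exists>c. w = c \<cdot>\<^sub>v v"
proof -
  have comp: "a * v $ i + b * w $ i = 0" if "i < n" for i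
    using arg_cong[OF dep, of "\<lambda>u. u $ i"] that v w by simp
  obtain i where "i < n" "v $ i \<noteq> 0"
    using nonzero_vec_index[OF v] by blast
  then have b: "b \<noteq> 0"
    using comp ab by auto
  have "w $ i = (- a / b) * v $ i" if "i < n" for i
  proof -
    have "b * w $ i = - (a * v $ i)"
      using comp[OF that] by (simp add: eq_neg_iff_add_eq_0 add.commute)
    then show ?thesis
      using b by (simp add: field_simps)
  qed
  then have "w = (- a / b) \<cdot>\<^sub>v v"
    using v w by (intro eq_vecI) auto
  then show ?thesis ..
qed

lemma neg_eigenvectors_of_product_proportional:
  fixes A B :: "real mat"
  assumes A: "A \<in> carrier_mat n n" and B: "B \<in> carrier_mat n n"
    and A_pd: "pos_def_mat n (sym_part A)" and B_sym: "transpose_mat B = B" and B_inv: "invertible_mat B"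
    and B_index: "negative_index_le_1 n B"
    and v: "eigenvector (A * B) v l1" and w: "eigenvector (A * B) w l2"
    and l1: "l1 < 0" and l2: "l2 < 0"
  shows "\<exists>c. w = c \<cdot>\<^sub>v v"
proof -
  have v': "v \<in> carrier_vec n" "v \<noteq> 0\<^sub>v n" "(A * B) *\<^sub>v v = l1 \<cdot>\<^sub>v v"
    and w': "w \<in> carrier_vec n" "(A * B) *\<^sub>v w = l2 \<cdot>\<^sub>v w"
    using v w A unfolding eigenvector_def by auto
  obtain a b where "(a, b) \<noteq> (0, 0)" "a \<cdot>\<^sub>v v + b \<cdot>\<^sub>v w = 0\<^sub>v n"
    using neg_eigenvectors_of_product_dependent[OF A B A_pd B_sym B_inv B_index v'(1) w'(1) v'(3) w'(2) l1 l2]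
    by blast
  then show ?thesis
    by (rule nonzero_dependent_vecs_proportional[OF v'(1,2) w'(1)])
qed

lemma eigenvalue_eq_if_eigenvectors_proportional:
  fixes M :: "'a::field mat"
  assumes M: "M \<in> carrier_mat n n" and "eigenvalue M l" and "eigenvalue M m"
    and proportional: "\<And>v w. eigenvector M v l \<Longrightarrow> eigenvector M w m \<Longrightarrow> \<exists>c. w = c \<cdot>\<^sub>v v"
  shows "l = m"
proof -
  obtain v w where v: "eigenvector M v l" and w: "eigenvector M w m"
    using assms(2,3) unfolding eigenvalue_def by blast
  then obtain c where c: "w = c \<cdot>\<^sub>v v"
    using proportional by blast
  have vc: "v \<in> carrier_vec n" and wc: "w \<in> carrier_vec n" "w \<noteq> 0\<^sub>v n"
    and Mv: "M *\<^sub>v v = l \<cdot>\<^sub>v v" and Mw: "M *\<^sub>v w = m \<cdot>\<^sub>v w"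
    using M v w unfolding eigenvector_def by auto
  have eq: "m \<cdot>\<^sub>v w = l \<cdot>\<^sub>v w"
    using M vc Mv Mw by (simp add: c mult_mat_vec smult_smult_assoc mult.commute)
  obtain i where i: "i < n" "w $ i \<noteq> 0"
    using nonzero_vec_index[OF wc] by blast
  have "(m \<cdot>\<^sub>v w) $ i = (l \<cdot>\<^sub>v w) $ i"
    by (simp only: eq)
  then have "m * w $ i = l * w $ i"
    using i wc by simp
  then show ?thesis
    using i(2) by simp
qed

lemma kernel_dim_eq_1I:
  fixes K :: "'a::field mat"
  assumes K: "K \<in> carrier_mat n n" and v: "v \<in> mat_kernel K" "v \<noteq> 0\<^sub>v n"
    and multiples: "\<And>w. w \<in> mat_kernel K \<Longrightarrow> \<exists>c. w = c \<cdot>\<^sub>v v"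
  shows "kernel_dim K = 1"
proof -
  interpret K: kernel n n K by unfold_locales (rule K)
  have "K.Ker.span {v} = mat_kernel K"
  proof
    show "K.Ker.span {v} \<subseteq> mat_kernel K"
      using K.Ker.span_is_subset2 v by simp
    show "mat_kernel K \<subseteq> K.Ker.span {v}"
    proof
      fix w assume "w \<in> mat_kernel K"
      then obtain c where c: "w = c \<cdot>\<^sub>v v"
        using multiples by blast
      have "submodule class_ring (K.Ker.span {v}) K.VK"
        using K.Ker.span_is_submodule v by simp
      moreover have "v \<in> K.Ker.span {v}"
        using K.Ker.span_self v by simp
      ultimately show "w \<in> K.Ker.span {v}"
        unfolding c using submodule.smult_closed[of class_ring _ K.VK c v] by simp
    qed
  qed
  then have "K.Ker.dim = 1"
    by (intro K.Ker.dim1I) (use v in auto)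
  then show ?thesis
    using K.kernel_dim by simp
qed

lemma geom_mult_eq_1I:
  fixes M :: "real mat"
  assumes M: "M \<in> carrier_mat n n" and "eigenvalue M l"
    and proportional: "\<And>v w. eigenvector M v l \<Longrightarrow> eigenvector M w l \<Longrightarrow> \<exists>c. w = c \<cdot>\<^sub>v v"
  shows "geom_mult M l = 1"
proof -
  obtain v where v: "eigenvector M v l"
    using assms(2) unfolding eigenvalue_def by blast
  have K: "char_matrix M l \<in> carrier_mat n n"
    using M by simp
  have "char_matrix M l *\<^sub>v 0\<^sub>v n = 0\<^sub>v n"
    using K by (intro eq_vecI) (auto simp: scalar_prod_def)
  then have ker: "w \<in> mat_kernel (char_matrix M l) \<longleftrightarrow> w = 0\<^sub>v n \<or> eigenvector M w l" for w
    using eigenvector_char_matrix[OF M] mat_kernel[OF K] by auto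
  have "kernel_dim (char_matrix M l) = 1"
  proof (rule kernel_dim_eq_1I[OF K])
    show "v \<in> mat_kernel (char_matrix M l)" "v \<noteq> 0\<^sub>v n"
      using ker v M unfolding eigenvector_def by auto
    fix w assume "w \<in> mat_kernel (char_matrix M l)"
    then consider "w = 0\<^sub>v n" | "eigenvector M w l"
      using ker by blast
    then show "\<exists>c. w = c \<cdot>\<^sub>v v"
    proof cases
      case 1
      then have "w = 0 \<cdot>\<^sub>v v"
        using v M unfolding eigenvector_def by (intro eq_vecI) auto
      then show ?thesis ..
    next
      case 2
      then show ?thesis by (rule proportional[OF v])
    qed
  qed
  moreover have "M - l \<cdot>\<^sub>m 1\<^sub>m (dim_row M) = char_matrix M l"
    using M by (intro eq_matI) (auto simp: char_matrix_def)
  ultimately show ?thesis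
    unfolding geom_mult_def by simp
qed

theorem lemma4p2:
  fixes A B :: "real mat" and n :: nat
  assumes A: "A \<in> carrier_mat n n" and B: "B \<in> carrier_mat n n"
    and Apd: "pos_def_mat n (sym_part A)"
    and Bsym: "transpose_mat B = B"
    and Binv: "invertible_mat B"
    and Bneg: "\<exists>l. l < 0 \<and> eigenvalue B l \<and> alg_mult B l = 1 \<and>
                  (\<forall>m. m < 0 \<and> eigenvalue B m \<longrightarrow> m = l)"
  shows "invertible_mat (A * B) \<and>
         (\<exists>!l. l < 0 \<and> eigenvalue (A * B) l) \<and>
         (\<forall>l. l < 0 \<and> eigenvalue (A * B) l \<longrightarrow> geom_mult (A * B) l = 1)"
proof -
  have B_det: "det B < 0" and B_index: "negative_index_le_1 n B"
    using simple_negative_eigenvalue_det_neg_index_le_1[OF B Bsym Binv Bneg] by auto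
  have C: "A * B \<in> carrier_mat n n"
    using A B by simp
  have det_C: "det (A * B) < 0"
    using det_mult[OF A B] det_pos_if_pos_def_sym_part[OF A Apd] B_det by (simp add: mult_pos_neg)
  note proportional = neg_eigenvectors_of_product_proportional[OF A B Apd Bsym Binv B_index]
  have "l = m" if l: "l < 0" "eigenvalue (A * B) l" and m: "m < 0" "eigenvalue (A * B) m" for l m
  proof (rule eigenvalue_eq_if_eigenvectors_proportional[OF C l(2) m(2)])
    fix v w assume "eigenvector (A * B) v l" "eigenvector (A * B) w m"
    then show "\<exists>c. w = c \<cdot>\<^sub>v v" by (rule proportional[OF _ _ l(1) m(1)])
  qed
  moreover have "geom_mult (A * B) l = 1" if l: "l < 0" "eigenvalue (A * B) l" for l
  proof (rule geom_mult_eq_1I[OF C l(2)])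
    fix v w assume "eigenvector (A * B) v l" "eigenvector (A * B) w l"
    then show "\<exists>c. w = c \<cdot>\<^sub>v v" by (rule proportional[OF _ _ l(1) l(1)])
  qed
  moreover have "invertible_mat (A * B)"
    using invertible_mat_iff_det_nonzero[OF C] det_C by simp
  ultimately show ?thesis
    using neg_eigenvalue_if_det_neg[OF C det_C] by blast
qed

end
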